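(* Let $n\in\mathbb N$. Then $\delta(n)<\delta(m)$ for every $m\in\mathbb N$ with $m>n$ if and only if $n=k^2$ or $n=k^2+k$ for some $k\in\mathbb N$ (in which case $\delta(n)=2k$, resp. $\delta(n)=2k+1$).
   Context: $\mathbb N$ is the set of positive integers. For $n\in\mathbb N$, $\delta(n)=\min\{\,r+s : r,s\in\mathbb N,\ r\le s,\ rs=n\,\}$, i.e. the minimum of $d+n/d$ over positive divisors $d$ of $n$. *)

theory Defs
  imports Main
begin

definition delta :: "nat \<Rightarrow> nat" where
  "delta n = Min {r + s | r s. 0 < r \<and> 0 < s \<and> r \<le> s \<and> r * s = n}"

end

theory Submission
  imports Defs
begin

text \<open>By AM-GM, \<open>4n \<le> \<delta>(n)\<^sup>2\<close>. For \<open>n = k\<^sup>2\<close> and \<open>n = k\<^sup>2 + k\<close> the factorisations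
  \<open>k \<cdot> k\<close> and \<open>k \<cdot> (k+1)\<close> give \<open>\<delta>(n)\<^sup>2 < 4(n+1) \<le> 4m \<le> \<delta>(m)\<^sup>2\<close> for every \<open>m > n\<close>.
  Conversely, if an optimal factorisation \<open>n = r s\<close> has \<open>s \<ge> r + 2\<close>, then
  \<open>(r+1)(s-1) > n\<close> has the same sum of factors, so \<open>\<delta>\<close> does not increase strictly after \<open>n\<close>.\<close>

lemma finite_factor_sums:
  "finite {r + s | r s. 0 < r \<and> 0 < s \<and> r \<le> s \<and> r * s = (n::nat)}"
proof (rule finite_subset)
  show "{r + s | r s. 0 < r \<and> 0 < s \<and> r \<le> s \<and> r * s = n} \<subseteq> {..2*n}"
  proof
    fix x assume "x \<in> {r + s | r s. 0 < r \<and> 0 < s \<and> r \<le> s \<and> r * s = n}"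
    then obtain r s where "x = r + s" "0 < r" "0 < s" "r * s = n" by blast
    moreover have "r \<le> r * s" "s \<le> r * s" using \<open>0 < r\<close> \<open>0 < s\<close> by simp_all
    ultimately show "x \<in> {..2*n}" by simp
  qed
qed simp

lemma delta_le:
  assumes "0 < r" "r \<le> s" "r * s = n"
  shows "delta n \<le> r + s"
  unfolding delta_def using assms
  by (intro Min_le[OF finite_factor_sums] CollectI exI[of _ r] exI[of _ s]) auto

lemma delta_attained:
  assumes "n \<ge> 1"
  obtains r s where "0 < r" "r \<le> s" "r * s = n" "delta n = r + s"
proof -
  let ?S = "{r + s | r s. 0 < r \<and> 0 < s \<and> r \<le> s \<and> r * s = n}"
  have "1 + n \<in> ?S" using assms by (intro CollectI exI[of _ 1] exI[of _ n]) auto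
  hence "delta n \<in> ?S" unfolding delta_def using Min_in[OF finite_factor_sums] by blast
  thus thesis using that by blast
qed

lemma four_mult_le_square_add: "4 * (r * s) \<le> ((r::nat) + s)^2"
proof -
  have "(int r + int s)^2 = 4 * (int r * int s) + (int r - int s)^2"
    by (simp add: power2_eq_square algebra_simps)
  hence "4 * (int r * int s) \<le> (int r + int s)^2" by simp
  thus ?thesis by (simp flip: of_nat_mult of_nat_add of_nat_power)
qed

lemma four_mult_le_delta_square:
  assumes "n \<ge> 1"
  shows "4 * n \<le> (delta n)^2"
proof -
  obtain r s where "r * s = n" "delta n = r + s" using delta_attained[OF assms] .
  thus ?thesis using four_mult_le_square_add[of r s] by simp
qed

lemma less_delta_if_square_less:
  assumes "n \<ge> 1" "t^2 < 4 * n"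
  shows "t < delta n"
proof (rule ccontr)
  assume "\<not> t < delta n"
  hence "(delta n)^2 \<le> t^2" by (simp add: power_mono)
  with four_mult_le_delta_square[OF assms(1)] assms(2) show False by linarith
qed

lemma delta_square:
  assumes "k \<ge> 1"
  shows "delta (k^2) = 2*k"
proof -
  have "delta (k^2) \<le> k + k" using assms by (intro delta_le) (simp_all add: power2_eq_square)
  moreover have "(2*k - 1)^2 < (2*k)^2" using assms by (intro power_strict_mono) simp_all
  hence "2*k - 1 < delta (k^2)" using assms by (intro less_delta_if_square_less) (simp_all add: power_mult_distrib)
  ultimately show ?thesis by simp
qed

lemma delta_pronic:
  assumes "k \<ge> 1"
  shows "delta (k^2 + k) = 2*k + 1"
proof -
  have "delta (k^2 + k) \<le> k + (k+1)" using assms by (intro delta_le) (simp_all add: power2_eq_square)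
  moreover have "2*k < delta (k^2 + k)"
    using assms by (intro less_delta_if_square_less) (simp_all add: power_mult_distrib)
  ultimately show ?thesis by simp
qed

lemma delta_less_delta_of_greater:
  assumes "n \<ge> 1" "(delta n)^2 < 4 * (n + 1)" "m > n"
  shows "delta n < delta m"
  using assms by (intro less_delta_if_square_less) simp_all

lemma square_or_pronic_if_delta_strictly_increases:
  assumes "n \<ge> 1" and incr: "\<forall>m > n. delta n < delta m"
  shows "\<exists>k\<ge>1. n = k^2 \<or> n = k^2 + k"
proof -
  obtain r s where rs: "0 < r" "r \<le> s" "r * s = n" "delta n = r + s"
    using delta_attained[OF assms(1)] .
  have "s < r + 2"
  proof (rule ccontr)
    assume "\<not> s < r + 2"
    define d where "d = s - (r + 2)"
    with \<open>\<not> s < r + 2\<close> have d: "s = r + 2 + d" by simp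
    have "n < (r + 1) * (r + 1 + d)" using rs d by (simp add: algebra_simps)
    hence "delta n < delta ((r + 1) * (r + 1 + d))" using incr by blast
    moreover have "delta ((r + 1) * (r + 1 + d)) \<le> (r + 1) + (r + 1 + d)" by (intro delta_le) auto
    ultimately show False using rs d by simp
  qed
  hence "s = r \<or> s = r + 1" using rs by linarith
  thus ?thesis using rs by (intro exI[of _ r]) (auto simp: power2_eq_square)
qed

theorem proposition5p4:
  fixes n :: nat
  assumes "n \<ge> 1"
  shows "((\<forall>m. m > n \<longrightarrow> delta n < delta m) \<longleftrightarrow>
           (\<exists>k\<ge>1. n = k^2 \<or> n = k^2 + k))
         \<and> (\<forall>k\<ge>1. n = k^2 \<longrightarrow> delta n = 2*k)
         \<and> (\<forall>k\<ge>1. n = k^2 + k \<longrightarrow> delta n = 2*k + 1)"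
proof (intro conjI allI impI iffI)
  show "\<exists>k\<ge>1. n = k^2 \<or> n = k^2 + k" if "\<forall>m. m > n \<longrightarrow> delta n < delta m"
    using square_or_pronic_if_delta_strictly_increases assms that by blast
next
  fix m assume "\<exists>k\<ge>1. n = k^2 \<or> n = k^2 + k" "m > n"
  then obtain k where "k \<ge> 1" "n = k^2 \<or> n = k^2 + k" by blast
  hence "(delta n)^2 < 4 * (n + 1)"
    using delta_square delta_pronic by (auto simp: power2_eq_square algebra_simps)
  thus "delta n < delta m" using delta_less_delta_of_greater assms \<open>m > n\<close> by blast
qed (use delta_square delta_pronic in auto)

end
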